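(* Let $T$ be a positive integer, $(\Omega,\mathcal{F},P)$ a probability space, $\mathbb{F}=(\mathcal{F}_t)_{t=0}^T$, $\mathbb{G}=(\mathcal{G}_t)_{t=0}^T$ filtrations with $\mathcal{G}_t\subseteq\mathcal{F}_t$, and $X^1,X^2,Y^1,Y^2$ real-valued $\mathbb{F}$-adapted processes indexed by $\{0,\dots,T\}$ with $E(\max_{0\le t\le T}|S_t|)<\infty$ for each $S\in\{X^1,X^2,Y^1,Y^2\}$, where $X^2,Y^2$ are moreover $\mathbb{G}$-adapted. Let $\Gamma$ be the game in which Player 1 chooses $\tau\in\mathcal{T}(\mathbb{F})$, Player 2 chooses $\nu\in\mathcal{T}(\mathbb{G})$, with expected utilities \[J_1(\tau,\nu)=E\left[X^1_\tau\mathbf{1}_{\{\tau\le\nu\}}+Y^1_\nu\mathbf{1}_{\{\tau>\nu\}}\right],\qquad J_2(\tau,\nu)=E\left[X^2_\nu\mathbf{1}_{\{\nu<\tau\}}+Y^2_\tau\mathbf{1}_{\{\tau\le\nu\}}\right].\] Assume $X^1_t\ge Y^1_t$ for every $0\le t\le T$, $P$-a.s. Let $\epsilon>0$ and let $\Gamma_\epsilon$ be identical to $\Gamma$ except that the expected utility of Player 1 is \[J_{1,\epsilon}(\tau,\nu)=E\left[(X^1_\tau+\epsilon)\mathbf{1}_{\{\tau\le\nu\}}+Y^1_\nu\mathbf{1}_{\{\tau>\nu\}}\right].\] If $(\tau_0,\nu_0)\in\mathcal{T}(\mathbb{F})\times\mathcal{T}(\mathbb{G})$ is a pure-strategy Nash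 equilibrium in $\Gamma_\epsilon$, then it is also a pure-strategy Nash equilibrium in $\Gamma$.
   Context: Time is discrete in $\{0,\dots,T\}$. For a filtration $\mathbb{H}$, $\mathcal{T}(\mathbb{H})$ is the set of $\mathbb{H}$-stopping times with values in $\{0,\dots,T\}$. A pair $(\tau^*,\nu^* )\in\mathcal{T}(\mathbb{F})\times\mathcal{T}(\mathbb{G})$ is a pure-strategy Nash equilibrium of a game with utilities $(U_1,U_2)$ if $U_1(\tau,\nu^* )\le U_1(\tau^*,\nu^* )$ for all $\tau\in\mathcal{T}(\mathbb{F})$ and $U_2(\tau^*,\nu)\le U_2(\tau^*,\nu^* )$ for all $\nu\in\mathcal{T}(\mathbb{G})$. *)

theory Defs
  imports "HOL-Probability.Probability"
begin

definition fin_filtration :: "'a measure \<Rightarrow> nat \<Rightarrow> (nat \<Rightarrow> 'a measure) \<Rightarrow> bool" where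
  "fin_filtration M T F \<longleftrightarrow>
     (\<forall>t\<le>T. subalgebra M (F t)) \<and>
     (\<forall>s t. s \<le> t \<longrightarrow> t \<le> T \<longrightarrow> sets (F s) \<subseteq> sets (F t))"

definition fin_adapted :: "nat \<Rightarrow> (nat \<Rightarrow> 'a measure) \<Rightarrow> (nat \<Rightarrow> 'a \<Rightarrow> real) \<Rightarrow> bool" where
  "fin_adapted T F X \<longleftrightarrow> (\<forall>t\<le>T. X t \<in> borel_measurable (F t))"

definition stopping_times :: "'a measure \<Rightarrow> nat \<Rightarrow> (nat \<Rightarrow> 'a measure) \<Rightarrow> ('a \<Rightarrow> nat) set" where
  "stopping_times M T F =
     {\<tau>. (\<forall>\<omega>\<in>space M. \<tau> \<omega> \<le> T) \<and>
          (\<forall>t\<le>T. {\<omega>\<in>space M. \<tau> \<omega> \<le> t} \<in> sets (F t))}"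

definition nash_eq :: "'s set \<Rightarrow> 'r set \<Rightarrow> ('s \<Rightarrow> 'r \<Rightarrow> real) \<Rightarrow> ('s \<Rightarrow> 'r \<Rightarrow> real)
    \<Rightarrow> 's \<Rightarrow> 'r \<Rightarrow> bool" where
  "nash_eq S1 S2 U1 U2 \<tau>s \<nu>s \<longleftrightarrow> \<tau>s \<in> S1 \<and> \<nu>s \<in> S2 \<and>
     (\<forall>\<tau>\<in>S1. U1 \<tau> \<nu>s \<le> U1 \<tau>s \<nu>s) \<and> (\<forall>\<nu>\<in>S2. U2 \<tau>s \<nu> \<le> U2 \<tau>s \<nu>s)"

end

theory Submission
  imports Defs
begin

text \<open>Raising Player 1's stopping reward by \<open>\<epsilon>\<close> adds exactly \<open>\<epsilon>\<close> to her payoff from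
  any strategy that never stops after \<open>\<nu>\<^sub>0\<close>, and at most \<open>\<epsilon>\<close> to her payoff from \<open>\<tau>\<^sub>0\<close>.
  Since \<open>Y\<^sup>1 \<le> X\<^sup>1\<close>, replacing any \<open>\<tau>\<close> by \<open>min \<tau> \<nu>\<^sub>0\<close> does not lower her payoff in
  the original game, so for every \<open>\<tau>\<close>
  \<open>J\<^sub>1(\<tau>,\<nu>\<^sub>0) \<le> J\<^sub>1(\<tau>\<and>\<nu>\<^sub>0,\<nu>\<^sub>0) = J\<^sub>1\<^sub>,\<^sub>\<epsilon>(\<tau>\<and>\<nu>\<^sub>0,\<nu>\<^sub>0) - \<epsilon> \<le> J\<^sub>1\<^sub>,\<^sub>\<epsilon>(\<tau>\<^sub>0,\<nu>\<^sub>0) - \<epsilon> \<le> J\<^sub>1(\<tau>\<^sub>0,\<nu>\<^sub>0)\<close>.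
  Player 2's payoff is the same in both games.\<close>

lemma nash_eq_of_perturbed_payoff:
  assumes eq: "nash_eq S1 S2 U1' U2 \<tau>0 \<nu>0"
    and improve: "\<And>\<tau>. \<tau> \<in> S1 \<Longrightarrow> \<exists>\<sigma>\<in>S1. U1 \<tau> \<nu>0 \<le> U1 \<sigma> \<nu>0 \<and> U1' \<sigma> \<nu>0 = U1 \<sigma> \<nu>0 + \<epsilon>"
    and bound: "U1' \<tau>0 \<nu>0 \<le> U1 \<tau>0 \<nu>0 + \<epsilon>"
  shows "nash_eq S1 S2 U1 U2 \<tau>0 \<nu>0"
proof -
  have "U1 \<tau> \<nu>0 \<le> U1 \<tau>0 \<nu>0" if \<tau>: "\<tau> \<in> S1" for \<tau>
  proof -
    obtain \<sigma> where "\<sigma> \<in> S1" and "U1 \<tau> \<nu>0 \<le> U1 \<sigma> \<nu>0" and "U1' \<sigma> \<nu>0 = U1 \<sigma> \<nu>0 + \<epsilon>"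
      using improve[OF \<tau>] by blast
    moreover have "U1' \<sigma> \<nu>0 \<le> U1' \<tau>0 \<nu>0"
      using eq \<open>\<sigma> \<in> S1\<close> unfolding nash_eq_def by blast
    ultimately show ?thesis using bound by linarith
  qed
  then show ?thesis using eq unfolding nash_eq_def by blast
qed

lemma stopping_times_mono:
  assumes "\<forall>t\<le>T. sets (G t) \<subseteq> sets (F t)"
  shows "stopping_times M T G \<subseteq> stopping_times M T F"
  using assms unfolding stopping_times_def by blast

lemma stopping_times_le:
  "\<tau> \<in> stopping_times M T F \<Longrightarrow> \<omega> \<in> space M \<Longrightarrow> \<tau> \<omega> \<le> T"
  unfolding stopping_times_def by blast

lemma min_stopping_times:
  assumes \<tau>: "\<tau> \<in> stopping_times M T F" and \<nu>: "\<nu> \<in> stopping_times M T F"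
  shows "(\<lambda>\<omega>. min (\<tau> \<omega>) (\<nu> \<omega>)) \<in> stopping_times M T F"
proof -
  have "{\<omega>\<in>space M. min (\<tau> \<omega>) (\<nu> \<omega>) \<le> t} \<in> sets (F t)" if "t \<le> T" for t
  proof -
    have "{\<omega>\<in>space M. min (\<tau> \<omega>) (\<nu> \<omega>) \<le> t} = {\<omega>\<in>space M. \<tau> \<omega> \<le> t} \<union> {\<omega>\<in>space M. \<nu> \<omega> \<le> t}"
      by auto
    then show ?thesis
      using \<tau> \<nu> that unfolding stopping_times_def by auto
  qed
  then show ?thesis
    using \<tau> unfolding stopping_times_def by auto
qed

lemma stopping_times_measurable:
  assumes F: "fin_filtration M T F" and \<tau>: "\<tau> \<in> stopping_times M T F"
  shows "\<tau> \<in> measurable M (count_space UNIV)"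
proof -
  have le: "{\<omega>\<in>space M. \<tau> \<omega> \<le> t} \<in> sets M" for t
  proof (cases "t \<le> T")
    case True
    then have "{\<omega>\<in>space M. \<tau> \<omega> \<le> t} \<in> sets (F t)" and "subalgebra M (F t)"
      using \<tau> F unfolding stopping_times_def fin_filtration_def by auto
    then show ?thesis unfolding subalgebra_def by blast
  next
    case False
    then have "{\<omega>\<in>space M. \<tau> \<omega> \<le> t} = space M"
      using stopping_times_le[OF \<tau>] by fastforce
    then show ?thesis by simp
  qed
  have "\<tau> -` {t} \<inter> space M \<in> sets M" for t
  proof (cases t)
    case 0
    then have "\<tau> -` {t} \<inter> space M = {\<omega>\<in>space M. \<tau> \<omega> \<le> 0}" by auto
    then show ?thesis using le[of 0] by simp
  next
    case (Suc s)
    then have "\<tau> -` {t} \<inter> space M = {\<omega>\<in>space M. \<tau> \<omega> \<le> t} - {\<omega>\<in>space M. \<tau> \<omega> \<le> s}" by auto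
    then show ?thesis using le by auto
  qed
  then show ?thesis by (simp add: measurable_count_space_eq2_countable)
qed

lemma borel_measurable_adapted:
  "fin_filtration M T F \<Longrightarrow> fin_adapted T F A \<Longrightarrow> t \<le> T \<Longrightarrow> A t \<in> borel_measurable M"
  using measurable_from_subalg unfolding fin_filtration_def fin_adapted_def by blast

lemma measurable_compose_countable2:
  fixes h :: "'i::countable \<Rightarrow> 'j::countable \<Rightarrow> 'a \<Rightarrow> 'b"
  assumes "\<tau> \<in> measurable M (count_space UNIV)" and "\<nu> \<in> measurable M (count_space UNIV)"
    and "\<And>i j. h i j \<in> measurable M N"
  shows "(\<lambda>\<omega>. h (\<tau> \<omega>) (\<nu> \<omega>) \<omega>) \<in> measurable M N"
proof -
  have "(\<lambda>\<omega>. h i (\<nu> \<omega>) \<omega>) \<in> measurable M N" for i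
    by (rule measurable_compose_countable[OF _ assms(2)]) (rule assms(3))
  then show ?thesis by (rule measurable_compose_countable[OF _ assms(1)])
qed

lemma integrable_stopped_indicator:
  fixes A :: "nat \<Rightarrow> 'a \<Rightarrow> real" and \<tau> \<nu> :: "'a \<Rightarrow> nat"
  assumes \<tau>: "\<tau> \<in> measurable M (count_space UNIV)" and \<nu>: "\<nu> \<in> measurable M (count_space UNIV)"
    and \<tau>_le: "\<forall>\<omega>\<in>space M. \<tau> \<omega> \<le> T"
    and A: "\<forall>t\<le>T. A t \<in> borel_measurable M"
    and int: "integrable M (\<lambda>\<omega>. MAX t\<in>{0..T}. \<bar>A t \<omega>\<bar>)"
  shows "integrable M (\<lambda>\<omega>. A (\<tau> \<omega>) \<omega> * indicator {\<omega>. P (\<tau> \<omega>) (\<nu> \<omega>)} \<omega>)"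
proof (rule Bochner_Integration.integrable_bound[OF int])
  let ?h = "\<lambda>i j \<omega>. A (min i T) \<omega> * (if P i j then 1 else 0)"
  have "(\<lambda>\<omega>. ?h (\<tau> \<omega>) (\<nu> \<omega>) \<omega>) \<in> borel_measurable M"
    by (rule measurable_compose_countable2[OF \<tau> \<nu>]) (use A in simp)
  moreover have "?h (\<tau> \<omega>) (\<nu> \<omega>) \<omega> = A (\<tau> \<omega>) \<omega> * indicator {\<omega>. P (\<tau> \<omega>) (\<nu> \<omega>)} \<omega>"
    if "\<omega> \<in> space M" for \<omega>
    using \<tau>_le that by (simp add: min_absorb1 indicator_def)
  ultimately show "(\<lambda>\<omega>. A (\<tau> \<omega>) \<omega> * indicator {\<omega>. P (\<tau> \<omega>) (\<nu> \<omega>)} \<omega>) \<in> borel_measurable M"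
    by (simp cong: measurable_cong)
  show "AE \<omega> in M. norm (A (\<tau> \<omega>) \<omega> * indicator {\<omega>. P (\<tau> \<omega>) (\<nu> \<omega>)} \<omega>)
      \<le> norm (MAX t\<in>{0..T}. \<bar>A t \<omega>\<bar>)"
  proof (rule AE_I2)
    fix \<omega> assume "\<omega> \<in> space M"
    then have "\<bar>A (\<tau> \<omega>) \<omega>\<bar> \<le> (MAX t\<in>{0..T}. \<bar>A t \<omega>\<bar>)"
      using \<tau>_le by (intro Max_ge) auto
    then show "norm (A (\<tau> \<omega>) \<omega> * indicator {\<omega>. P (\<tau> \<omega>) (\<nu> \<omega>)} \<omega>)
        \<le> norm (MAX t\<in>{0..T}. \<bar>A t \<omega>\<bar>)"
      by (auto simp: indicator_def)
  qed
qed

text \<open>This is \<open>J\<^sub>1\<close>; the perturbed payoff \<open>J\<^sub>1\<^sub>,\<^sub>\<epsilon>\<close> is obtained by shifting \<open>X\<close> by \<open>\<epsilon>\<close>.\<close>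

definition stopping_payoff ::
    "'a measure \<Rightarrow> (nat \<Rightarrow> 'a \<Rightarrow> real) \<Rightarrow> (nat \<Rightarrow> 'a \<Rightarrow> real) \<Rightarrow> ('a \<Rightarrow> nat) \<Rightarrow> ('a \<Rightarrow> nat) \<Rightarrow> real"
  where "stopping_payoff M X Y \<tau> \<nu> =
    (\<integral>\<omega>. X (\<tau> \<omega>) \<omega> * indicator {\<omega>. \<tau> \<omega> \<le> \<nu> \<omega>} \<omega> + Y (\<nu> \<omega>) \<omega> * indicator {\<omega>. \<tau> \<omega> > \<nu> \<omega>} \<omega> \<partial>M)"

context
  fixes M :: "'a measure" and T :: nat and F :: "nat \<Rightarrow> 'a measure" and X Y :: "nat \<Rightarrow> 'a \<Rightarrow> real"
  assumes M: "prob_space M" and F: "fin_filtration M T F"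
    and X: "fin_adapted T F X" and Y: "fin_adapted T F Y"
    and int_X: "integrable M (\<lambda>\<omega>. MAX t\<in>{0..T}. \<bar>X t \<omega>\<bar>)"
    and int_Y: "integrable M (\<lambda>\<omega>. MAX t\<in>{0..T}. \<bar>Y t \<omega>\<bar>)"
begin

lemma integrable_stopping_payoff:
  assumes \<tau>: "\<tau> \<in> stopping_times M T F" and \<nu>: "\<nu> \<in> stopping_times M T F"
  shows "integrable M (\<lambda>\<omega>. X (\<tau> \<omega>) \<omega> * indicator {\<omega>. \<tau> \<omega> \<le> \<nu> \<omega>} \<omega>
                            + Y (\<nu> \<omega>) \<omega> * indicator {\<omega>. \<tau> \<omega> > \<nu> \<omega>} \<omega>)"
proof -
  note meas = stopping_times_measurable[OF F]
  have "integrable M (\<lambda>\<omega>. X (\<tau> \<omega>) \<omega> * indicator {\<omega>. \<tau> \<omega> \<le> \<nu> \<omega>} \<omega>)"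
    using integrable_stopped_indicator[OF meas[OF \<tau>] meas[OF \<nu>], of T X "(\<le>)"]
      stopping_times_le[OF \<tau>] borel_measurable_adapted[OF F X] int_X by blast
  moreover have "integrable M (\<lambda>\<omega>. Y (\<nu> \<omega>) \<omega> * indicator {\<omega>. \<tau> \<omega> > \<nu> \<omega>} \<omega>)"
    using integrable_stopped_indicator[OF meas[OF \<nu>] meas[OF \<tau>], of T Y "(<)"]
      stopping_times_le[OF \<nu>] borel_measurable_adapted[OF F Y] int_Y by blast
  ultimately show ?thesis by simp
qed

lemma stopping_payoff_shift:
  assumes \<tau>: "\<tau> \<in> stopping_times M T F" and \<nu>: "\<nu> \<in> stopping_times M T F"
  shows "stopping_payoff M (\<lambda>t \<omega>. X t \<omega> + c) Y \<tau> \<nu>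
    = stopping_payoff M X Y \<tau> \<nu> + (\<integral>\<omega>. c * indicator {\<omega>. \<tau> \<omega> \<le> \<nu> \<omega>} \<omega> \<partial>M)"
proof -
  interpret prob_space M by (rule M)
  note meas = stopping_times_measurable[OF F]
  have "integrable M (\<lambda>\<omega>. c * indicator {\<omega>. \<tau> \<omega> \<le> \<nu> \<omega>} \<omega>)"
    using integrable_stopped_indicator[OF meas[OF \<tau>] meas[OF \<nu>], of T "\<lambda>_ _. c" "(\<le>)"]
      stopping_times_le[OF \<tau>] by simp
  then show ?thesis
    using integrable_stopping_payoff[OF \<tau> \<nu>] unfolding stopping_payoff_def
    by (simp add: algebra_simps Bochner_Integration.integral_add[symmetric])
qed

lemma stopping_payoff_shift_le:
  assumes "\<tau> \<in> stopping_times M T F" and "\<nu> \<in> stopping_times M T F" and "0 \<le> c"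
  shows "stopping_payoff M (\<lambda>t \<omega>. X t \<omega> + c) Y \<tau> \<nu> \<le> stopping_payoff M X Y \<tau> \<nu> + c"
proof -
  interpret prob_space M by (rule M)
  have "(\<integral>\<omega>. c * indicator {\<omega>. \<tau> \<omega> \<le> \<nu> \<omega>} \<omega> \<partial>M) \<le> (\<integral>\<omega>. c \<partial>M)"
    using \<open>0 \<le> c\<close> by (intro integral_mono_AE') (auto simp: indicator_def)
  then show ?thesis
    using stopping_payoff_shift[OF assms(1,2)] prob_space by simp
qed

lemma stopping_payoff_shift_eq:
  assumes "\<tau> \<in> stopping_times M T F" and "\<nu> \<in> stopping_times M T F"
    and "\<forall>\<omega>\<in>space M. \<tau> \<omega> \<le> \<nu> \<omega>"
  shows "stopping_payoff M (\<lambda>t \<omega>. X t \<omega> + c) Y \<tau> \<nu> = stopping_payoff M X Y \<tau> \<nu> + c"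
proof -
  have "(\<integral>\<omega>. c * indicator {\<omega>. \<tau> \<omega> \<le> \<nu> \<omega>} \<omega> \<partial>M) = (\<integral>\<omega>. c \<partial>M)"
    using assms(3) by (intro Bochner_Integration.integral_cong) auto
  then show ?thesis
    using stopping_payoff_shift[OF assms(1,2)] prob_space.prob_space[OF M] by simp
qed

text \<open>On \<open>{\<tau> > \<nu>}\<close> stopping at \<open>\<nu>\<close> instead turns the reward \<open>Y\<^sub>\<nu>\<close> into \<open>X\<^sub>\<nu> \<ge> Y\<^sub>\<nu>\<close>.\<close>

lemma stopping_payoff_le_min:
  assumes \<tau>: "\<tau> \<in> stopping_times M T F" and \<nu>: "\<nu> \<in> stopping_times M T F"
    and YX: "\<forall>t\<le>T. AE \<omega> in M. Y t \<omega> \<le> X t \<omega>"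
  shows "stopping_payoff M X Y \<tau> \<nu> \<le> stopping_payoff M X Y (\<lambda>\<omega>. min (\<tau> \<omega>) (\<nu> \<omega>)) \<nu>"
  unfolding stopping_payoff_def
proof (rule integral_mono_AE)
  show "integrable M (\<lambda>\<omega>. X (\<tau> \<omega>) \<omega> * indicator {\<omega>. \<tau> \<omega> \<le> \<nu> \<omega>} \<omega>
                          + Y (\<nu> \<omega>) \<omega> * indicator {\<omega>. \<tau> \<omega> > \<nu> \<omega>} \<omega>)"
    by (rule integrable_stopping_payoff[OF \<tau> \<nu>])
  show "integrable M (\<lambda>\<omega>. X (min (\<tau> \<omega>) (\<nu> \<omega>)) \<omega> * indicator {\<omega>. min (\<tau> \<omega>) (\<nu> \<omega>) \<le> \<nu> \<omega>} \<omega>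
                          + Y (\<nu> \<omega>) \<omega> * indicator {\<omega>. min (\<tau> \<omega>) (\<nu> \<omega>) > \<nu> \<omega>} \<omega>)"
    by (rule integrable_stopping_payoff[OF min_stopping_times[OF \<tau> \<nu>] \<nu>])
  have "AE \<omega> in M. \<forall>t\<in>{..T}. Y t \<omega> \<le> X t \<omega>"
    using YX by (intro AE_finite_allI) auto
  with AE_space show "AE \<omega> in M.
      X (\<tau> \<omega>) \<omega> * indicator {\<omega>. \<tau> \<omega> \<le> \<nu> \<omega>} \<omega> + Y (\<nu> \<omega>) \<omega> * indicator {\<omega>. \<tau> \<omega> > \<nu> \<omega>} \<omega>
    \<le> X (min (\<tau> \<omega>) (\<nu> \<omega>)) \<omega> * indicator {\<omega>. min (\<tau> \<omega>) (\<nu> \<omega>) \<le> \<nu> \<omega>} \<omega>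
      + Y (\<nu> \<omega>) \<omega> * indicator {\<omega>. min (\<tau> \<omega>) (\<nu> \<omega>) > \<nu> \<omega>} \<omega>"
    by eventually_elim (use stopping_times_le[OF \<nu>] in \<open>auto simp: indicator_def\<close>)
qed

end

theorem lemma1:
  fixes M :: "'a measure" and T :: nat and F G :: "nat \<Rightarrow> 'a measure"
    and X1 X2 Y1 Y2 :: "nat \<Rightarrow> 'a \<Rightarrow> real" and \<epsilon> :: real
    and \<tau>0 \<nu>0 :: "'a \<Rightarrow> nat"
  assumes "0 < T"
    and "prob_space M"
    and "fin_filtration M T F" and "fin_filtration M T G"
    and "\<forall>t\<le>T. sets (G t) \<subseteq> sets (F t)"
    and "fin_adapted T F X1" and "fin_adapted T F X2"
    and "fin_adapted T F Y1" and "fin_adapted T F Y2"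
    and "fin_adapted T G X2" and "fin_adapted T G Y2"
    and "\<forall>S\<in>{X1, X2, Y1, Y2}. integrable M (\<lambda>\<omega>. MAX t\<in>{0..T}. \<bar>S t \<omega>\<bar>)"
    and "\<forall>t\<le>T. AE \<omega> in M. Y1 t \<omega> \<le> X1 t \<omega>"
    and "0 < \<epsilon>"
    and "nash_eq (stopping_times M T F) (stopping_times M T G)
           (\<lambda>\<tau> \<nu>. integral\<^sup>L M (\<lambda>\<omega>. (X1 (\<tau> \<omega>) \<omega> + \<epsilon>) * indicator {\<omega>. \<tau> \<omega> \<le> \<nu> \<omega>} \<omega>
                                  + Y1 (\<nu> \<omega>) \<omega> * indicator {\<omega>. \<tau> \<omega> > \<nu> \<omega>} \<omega>))
           (\<lambda>\<tau> \<nu>. integral\<^sup>L M (\<lambda>\<omega>. X2 (\<nu> \<omega>) \<omega> * indicator {\<omega>. \<nu> \<omega> < \<tau> \<omega>} \<omega>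
                                  + Y2 (\<tau> \<omega>) \<omega> * indicator {\<omega>. \<tau> \<omega> \<le> \<nu> \<omega>} \<omega>))
           \<tau>0 \<nu>0"
  shows "nash_eq (stopping_times M T F) (stopping_times M T G)
           (\<lambda>\<tau> \<nu>. integral\<^sup>L M (\<lambda>\<omega>. X1 (\<tau> \<omega>) \<omega> * indicator {\<omega>. \<tau> \<omega> \<le> \<nu> \<omega>} \<omega>
                                  + Y1 (\<nu> \<omega>) \<omega> * indicator {\<omega>. \<tau> \<omega> > \<nu> \<omega>} \<omega>))
           (\<lambda>\<tau> \<nu>. integral\<^sup>L M (\<lambda>\<omega>. X2 (\<nu> \<omega>) \<omega> * indicator {\<omega>. \<nu> \<omega> < \<tau> \<omega>} \<omega>
                                  + Y2 (\<tau> \<omega>) \<omega> * indicator {\<omega>. \<tau> \<omega> \<le> \<nu> \<omega>} \<omega>))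
           \<tau>0 \<nu>0"
proof -
  let ?SF = "stopping_times M T F" and ?SG = "stopping_times M T G"
  have integrable_max: "integrable M (\<lambda>\<omega>. MAX t\<in>{0..T}. \<bar>X1 t \<omega>\<bar>)" "integrable M (\<lambda>\<omega>. MAX t\<in>{0..T}. \<bar>Y1 t \<omega>\<bar>)"
    using assms(12) by auto
  note payoff = stopping_payoff_shift_le stopping_payoff_shift_eq stopping_payoff_le_min
  note payoff = payoff[OF assms(2,3,6,8) integrable_max]
  have main: "nash_eq ?SF ?SG (stopping_payoff M X1 Y1) U2 \<tau>0 \<nu>0"
    if eq: "nash_eq ?SF ?SG (stopping_payoff M (\<lambda>t \<omega>. X1 t \<omega> + \<epsilon>) Y1) U2 \<tau>0 \<nu>0" for U2
  proof (rule nash_eq_of_perturbed_payoff[OF eq])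
    have \<tau>0: "\<tau>0 \<in> ?SF" and \<nu>0: "\<nu>0 \<in> ?SF"
      using eq stopping_times_mono[OF assms(5)] unfolding nash_eq_def by auto
    then show "stopping_payoff M (\<lambda>t \<omega>. X1 t \<omega> + \<epsilon>) Y1 \<tau>0 \<nu>0 \<le> stopping_payoff M X1 Y1 \<tau>0 \<nu>0 + \<epsilon>"
      using payoff(1) assms(14) by simp
    fix \<tau> assume \<tau>: "\<tau> \<in> ?SF"
    let ?\<sigma> = "\<lambda>\<omega>. min (\<tau> \<omega>) (\<nu>0 \<omega>)"
    have "?\<sigma> \<in> ?SF" by (rule min_stopping_times[OF \<tau> \<nu>0])
    moreover have "stopping_payoff M X1 Y1 \<tau> \<nu>0 \<le> stopping_payoff M X1 Y1 ?\<sigma> \<nu>0"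
      by (rule payoff(3)[OF \<tau> \<nu>0 assms(13)])
    moreover have "stopping_payoff M (\<lambda>t \<omega>. X1 t \<omega> + \<epsilon>) Y1 ?\<sigma> \<nu>0 = stopping_payoff M X1 Y1 ?\<sigma> \<nu>0 + \<epsilon>"
      using payoff(2) \<open>?\<sigma> \<in> ?SF\<close> \<nu>0 by simp
    ultimately show "\<exists>\<sigma>\<in>?SF. stopping_payoff M X1 Y1 \<tau> \<nu>0 \<le> stopping_payoff M X1 Y1 \<sigma> \<nu>0 \<and>
        stopping_payoff M (\<lambda>t \<omega>. X1 t \<omega> + \<epsilon>) Y1 \<sigma> \<nu>0 = stopping_payoff M X1 Y1 \<sigma> \<nu>0 + \<epsilon>"
      by blast
  qed
  show ?thesis
    using assms(15) unfolding stopping_payoff_def by (rule main[unfolded stopping_payoff_def])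
qed

end
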